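(* For every positive integer $N$ and all $w_1,w_2\in\mathcal{H}^1$, $\mathsf{F}_N(w_1;t)\,\mathsf{F}_N(w_2;t)=\mathsf{F}_N(w_1\,\overline{*}\,w_2;t)$ in $\mathbb{Q}(t)$.
   Context: $t$ is an indeterminate, $[n]=\{1,\dots,n\}$. An index is a tuple of positive integers. For an index $\boldsymbol{k}=(k_1,\dots,k_r)$ and $A\subset[r]$ let $\overline{S}_{r,N}(A)=\{(n_1,\dots,n_r)\in[N-1]^r: n_{i-1}\le n_i\text{ if }1<i\in[r]\setminus A,\ n_{i-1}<n_i\text{ if }1<i\in A\}$, and \[ F_N(\boldsymbol{k};t)=\sum_{A\subset[r]}(-1)^{\#A}\sum_{(n_1,\dots,n_r)\in\overline{S}_{r,N}(A)}\Bigl(\prod_{i\in A}\frac1{(N-n_i+t)^{k_i}}\Bigr)\Bigl(\prod_{i\in[r]\setminus A}\frac1{n_i^{k_i}}\Bigr). \] $\mathcal{H}=\mathbb{Q}\langle x,y\rangle$, $\mathcal{H}^1=\mathbb{Q}+y\mathcal{H}$, $e_k=yx^{k-1}$; $\mathsf{F}_N\colon\mathcal{H}^1\to\mathbb{Q}(t)$ is $\mathbb{Q}$-linear with $\mathsf{F}_N(1)=1$ and $\mathsf{F}_N(e_{k_1}\cdots e_{k_r})=F_N(\boldsymbol{k};t)$. The star-harmonic product $\overline{*}$ on $\mathcal{H}^1$ is $\mathbb{Q}$-bilinear with $w\,\overline{*}\,1=1\,\overline{*}\,w=w$ and $w_1e_{k_1}\,\overline{*}\,w_2e_{k_2}=(w_1\,\overline{*}\,w_2e_{k_2})e_{k_1}+(w_1e_{k_1}\,\overline{*}\,w_2)e_{k_2}-(w_1\,\overline{*}\,w_2)e_{k_1+k_2}$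 for words $w_1,w_2\in\mathcal{H}^1$. *)

theory Defs
  imports "HOL-Computational_Algebra.Polynomial" "HOL-Computational_Algebra.Fraction_Field"
begin

type_synonym ratfun = "rat poly fract"

definition rf_const :: "rat \<Rightarrow> ratfun" where
  "rf_const c = Fract [:c:] 1"

definition tvar :: ratfun where
  "tvar = Fract [:0, 1:] 1"

text \<open>An index (k_1,...,k_r) is a list of positive integers; it represents the word
  e_{k_1} ... e_{k_r} of H^1 (the empty list represents the word 1).\<close>
definition is_index :: "nat list \<Rightarrow> bool" where
  "is_index ks \<longleftrightarrow> (\<forall>k\<in>set ks. 0 < k)"

text \<open>The set S-bar_{r,N}(A), with positions 0-based: A \<subseteq> {0..<r}, tuples as lists.\<close>
definition Sbar :: "nat \<Rightarrow> nat \<Rightarrow> nat set \<Rightarrow> nat list set" where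
  "Sbar r N A = {ns. length ns = r \<and> (\<forall>i<r. 1 \<le> ns ! i \<and> ns ! i \<le> N - 1) \<and>
      (\<forall>i. 0 < i \<and> i < r \<longrightarrow>
         (i \<notin> A \<longrightarrow> ns ! (i - 1) \<le> ns ! i) \<and> (i \<in> A \<longrightarrow> ns ! (i - 1) < ns ! i))}"

definition F_idx :: "nat \<Rightarrow> nat list \<Rightarrow> ratfun" where
  "F_idx N ks = (let r = length ks in
     \<Sum>A \<in> Pow {0..<r}. (-1) ^ card A *
       (\<Sum>ns \<in> Sbar r N A.
          (\<Prod>i\<in>A. 1 / (of_nat (N - ns ! i) + tvar) ^ (ks ! i)) *
          (\<Prod>i\<in>{0..<r} - A. 1 / (of_nat (ns ! i)) ^ (ks ! i))))"

text \<open>Elements of H^1: finitely supported Q-coefficient functions on indices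
  (coefficients w.r.t. the basis of words e_{k_1}...e_{k_r}).\<close>
definition supp :: "(nat list \<Rightarrow> rat) \<Rightarrow> nat list set" where
  "supp f = {u. f u \<noteq> 0}"

definition H1 :: "(nat list \<Rightarrow> rat) set" where
  "H1 = {f. finite (supp f) \<and> (\<forall>u\<in>supp f. is_index u)}"

definition FN :: "nat \<Rightarrow> (nat list \<Rightarrow> rat) \<Rightarrow> ratfun" where
  "FN N f = (\<Sum>u\<in>supp f. rf_const (f u) * F_idx N u)"

text \<open>Right multiplication by e_k, written on reversed words (so it is a cons).\<close>
definition rcons :: "nat \<Rightarrow> (nat list \<Rightarrow> rat) \<Rightarrow> (nat list \<Rightarrow> rat)" where
  "rcons k f = (\<lambda>u. case u of [] \<Rightarrow> 0 | j # u' \<Rightarrow> if j = k then f u' else 0)"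

text \<open>Star-harmonic product of two words, on reversed words (last letter first).\<close>
fun shr :: "nat list \<Rightarrow> nat list \<Rightarrow> (nat list \<Rightarrow> rat)" where
  "shr [] v = (\<lambda>u. if u = v then 1 else 0)"
| "shr (k # u) [] = (\<lambda>x. if x = k # u then 1 else 0)"
| "shr (k1 # u1) (k2 # u2) =
     (\<lambda>x. rcons k1 (shr u1 (k2 # u2)) x + rcons k2 (shr (k1 # u1) u2) x
          - rcons (k1 + k2) (shr u1 u2) x)"

definition starh_word :: "nat list \<Rightarrow> nat list \<Rightarrow> (nat list \<Rightarrow> rat)" where
  "starh_word a b = (\<lambda>u. shr (rev a) (rev b) (rev u))"

definition starh :: "(nat list \<Rightarrow> rat) \<Rightarrow> (nat list \<Rightarrow> rat) \<Rightarrow> (nat list \<Rightarrow> rat)" where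
  "starh f g = (\<lambda>u. \<Sum>a\<in>supp f. \<Sum>b\<in>supp g. f a * g b * starh_word a b u)"

end

theory Submission
  imports Defs
begin

text \<open>Splitting off the last summation variable n_r of F_N, according to whether r \<in> A,
  shows that F_N(k_1,...,k_r) is the value at m = N - 1 of the nested sum
  G(k_r ... k_1; m) = \<Sum>_{n=1..m} a_{k_r}(n) G(k_{r-1} ... k_1; n) + b_{k_r}(n) G(k_{r-1} ... k_1; n - 1)
  with a_k(n) = n^{-k} and b_k(n) = -(N - n + t)^{-k}. These letters satisfy
  a_{k+l} = a_k a_l and b_{k+l} = - b_k b_l, which is exactly what is needed for the recursion of
  the star-harmonic product to reproduce the expansion of G(u; m+1) G(v; m+1) in terms of
  G(\<cdot>; m). Hence G(u; m) G(v; m) = G(u \<star> v; m) by induction on m and on the words,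
  and the theorem follows by bilinearity.\<close>

instance fract :: ("{idom, ring_char_0}") field_char_0
proof
  show "inj (of_nat :: nat \<Rightarrow> 'a fract)"
    by (rule injI) (simp add: of_nat_fract eq_fract)
qed

lemma of_int_fract: "of_int k = Fract (of_int k) 1"
proof (cases k rule: int_cases)
  case (neg n)
  then show ?thesis
    by (simp add: of_nat_fract[symmetric] minus_fract[symmetric] del: of_nat_Suc)
qed (simp add: of_nat_fract)

lemma rf_const_eq_of_rat: "rf_const = of_rat"
proof
  fix c :: rat
  obtain p q where c: "c = Rat.Fract p q" and "q > 0" by (cases c) auto
  have "rf_const (Rat.Fract p q) = Fract [:of_int p:] [:of_int q:]"
    using \<open>q > 0\<close> by (simp add: rf_const_def eq_fract Fract_of_int_quotient)
  then show "rf_const c = of_rat c"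
    using \<open>q > 0\<close> by (simp add: c of_rat_rat of_int_fract of_int_poly)
qed

definition lin_ext :: "(nat list \<Rightarrow> 'a::field_char_0) \<Rightarrow> (nat list \<Rightarrow> rat) \<Rightarrow> 'a" where
  "lin_ext \<phi> f = (\<Sum>x\<in>supp f. of_rat (f x) * \<phi> x)"

lemma lin_ext_superset:
  assumes "finite S" "supp f \<subseteq> S"
  shows "lin_ext \<phi> f = (\<Sum>x\<in>S. of_rat (f x) * \<phi> x)"
  unfolding lin_ext_def
  by (rule sum.mono_neutral_left) (use assms in \<open>auto simp: supp_def\<close>)

lemma lin_ext_sum:
  assumes "finite I" "\<And>i. i \<in> I \<Longrightarrow> finite (supp (f i))"
  shows "lin_ext \<phi> (\<lambda>x. \<Sum>i\<in>I. f i x) = (\<Sum>i\<in>I. lin_ext \<phi> (f i))"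
proof -
  let ?S = "\<Union>i\<in>I. supp (f i)"
  have S: "finite ?S" using assms by blast
  have "supp (\<lambda>x. \<Sum>i\<in>I. f i x) \<subseteq> ?S"
    unfolding supp_def by (auto elim: sum.not_neutral_contains_not_neutral)
  then have "lin_ext \<phi> (\<lambda>x. \<Sum>i\<in>I. f i x) = (\<Sum>x\<in>?S. \<Sum>i\<in>I. of_rat (f i x) * \<phi> x)"
    by (simp add: lin_ext_superset[OF S] of_rat_sum sum_distrib_right)
  also have "\<dots> = (\<Sum>i\<in>I. lin_ext \<phi> (f i))"
    by (subst sum.swap) (intro sum.cong refl, rule lin_ext_superset[symmetric, OF S], auto)
  finally show ?thesis .
qed

lemma finite_supp_add:
  assumes "finite (supp f)" "finite (supp g)"
  shows "finite (supp (\<lambda>x. f x + g x))"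
proof (rule finite_subset)
  show "supp (\<lambda>x. f x + g x) \<subseteq> supp f \<union> supp g" by (auto simp: supp_def)
qed (use assms in simp)

lemma lin_ext_add:
  assumes "finite (supp f)" "finite (supp g)"
  shows "lin_ext \<phi> (\<lambda>x. f x + g x) = lin_ext \<phi> f + lin_ext \<phi> g"
  using lin_ext_sum[of "{True, False}" "\<lambda>i. if i then f else g" \<phi>] assms by simp

lemma lin_ext_scale: "lin_ext \<phi> (\<lambda>x. c * f x) = of_rat c * lin_ext \<phi> f"
proof (cases "c = 0")
  case False
  then have "supp (\<lambda>x. c * f x) = supp f" by (auto simp: supp_def)
  with False show ?thesis
    by (simp add: lin_ext_def of_rat_mult sum_distrib_left mult.assoc)
qed (simp add: lin_ext_def supp_def)

lemma lin_ext_diff: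
  assumes "finite (supp f)" "finite (supp g)"
  shows "lin_ext \<phi> (\<lambda>x. f x - g x) = lin_ext \<phi> f - lin_ext \<phi> g"
proof -
  have neg: "lin_ext \<phi> (\<lambda>x. - g x) = - lin_ext \<phi> g"
    using lin_ext_scale[of \<phi> "- 1" g] by simp
  have "finite (supp (\<lambda>x. - g x))" using assms(2) by (simp add: supp_def)
  then have "lin_ext \<phi> (\<lambda>x. f x + - g x) = lin_ext \<phi> f + lin_ext \<phi> (\<lambda>x. - g x)"
    by (rule lin_ext_add[OF assms(1)])
  with neg show ?thesis by simp
qed

lemma lin_ext_add_fun: "lin_ext (\<lambda>x. \<phi> x + \<psi> x) f = lin_ext \<phi> f + lin_ext \<psi> f"
  by (simp add: lin_ext_def algebra_simps sum.distrib)

lemma lin_ext_scale_fun: "lin_ext (\<lambda>x. c * \<phi> x) f = c * lin_ext \<phi> f"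
  by (simp add: lin_ext_def algebra_simps sum_distrib_left)

lemma lin_ext_delta: "lin_ext \<phi> (\<lambda>x. if x = y then 1 else 0) = \<phi> y"
proof -
  have "supp (\<lambda>x. if x = y then 1 else 0) = {y}" by (auto simp: supp_def)
  then show ?thesis by (simp add: lin_ext_def)
qed

lemma lin_ext_delta_coeff:
  assumes "finite (supp f)"
  shows "lin_ext (\<lambda>x. if x = y then 1 else 0) f = of_rat (f y)"
  using assms
  by (subst lin_ext_superset[of "insert y (supp f)"])
    (auto simp: if_distrib[of "\<lambda>z. _ * z"] sum.delta cong: if_cong)

lemma lin_ext_rev: "lin_ext \<phi> (\<lambda>x. f (rev x)) = lin_ext (\<lambda>x. \<phi> (rev x)) f"
proof -
  have "supp (\<lambda>x. f (rev x)) = rev ` supp f"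
    by (auto simp: supp_def image_iff) (metis rev_rev_ident)
  then show ?thesis
    unfolding lin_ext_def by (simp add: sum.reindex)
qed

lemma supp_rcons: "supp (rcons k f) = (#) k ` supp f"
proof (intro set_eqI)
  show "x \<in> supp (rcons k f) \<longleftrightarrow> x \<in> (#) k ` supp f" for x
    by (cases x) (auto simp: supp_def rcons_def)
qed

lemma lin_ext_rcons: "lin_ext \<phi> (rcons k f) = lin_ext (\<lambda>x. \<phi> (k # x)) f"
  unfolding lin_ext_def supp_rcons by (subst sum.reindex) (auto simp: rcons_def)

lemma finite_supp_shr: "finite (supp (shr u v))"
proof (induction u v rule: shr.induct)
  case (3 k1 u1 k2 u2)
  have "supp (shr (k1 # u1) (k2 # u2)) \<subseteq>
      supp (rcons k1 (shr u1 (k2 # u2))) \<union> supp (rcons k2 (shr (k1 # u1) u2)) \<union>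
      supp (rcons (k1 + k2) (shr u1 u2))"
    by (auto simp: supp_def)
  with 3 show ?case by (simp add: supp_rcons finite_subset)
qed (simp_all add: supp_def)

lemma shr_Nil: "shr u v [] = (if u = [] \<and> v = [] then 1 else 0)"
  by (induction u v rule: shr.induct) (auto simp: rcons_def)

lemma lin_ext_shr_Cons_Cons:
  "lin_ext \<phi> (shr (k1 # u1) (k2 # u2)) =
     lin_ext \<phi> (rcons k1 (shr u1 (k2 # u2))) + lin_ext \<phi> (rcons k2 (shr (k1 # u1) u2)) -
     lin_ext \<phi> (rcons (k1 + k2) (shr u1 u2))"
proof -
  have fin: "finite (supp (rcons k (shr u v)))" for k u v
    by (simp add: supp_rcons finite_supp_shr)
  show ?thesis
    by (simp only: shr.simps lin_ext_add[OF fin fin]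
        lin_ext_diff[OF finite_supp_add[OF fin fin] fin])
qed

lemma finite_supp_starh_word: "finite (supp (starh_word u v))"
proof -
  have "supp (starh_word u v) = rev ` supp (shr (rev u) (rev v))"
    by (auto simp: supp_def starh_word_def image_iff) (metis rev_rev_ident)
  then show ?thesis by (simp add: finite_supp_shr)
qed

lemma lin_ext_starh:
  assumes "finite (supp f)" "finite (supp g)"
    and mult: "\<And>u v. \<phi> u * \<phi> v = lin_ext \<phi> (starh_word u v)"
  shows "lin_ext \<phi> f * lin_ext \<phi> g = lin_ext \<phi> (starh f g)"
proof -
  let ?I = "supp f \<times> supp g"
  have "starh f g = (\<lambda>x. \<Sum>p\<in>?I. f (fst p) * g (snd p) * starh_word (fst p) (snd p) x)"
    by (simp add: starh_def sum.cartesian_product split_def)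
  moreover have "finite (supp (\<lambda>x. c * starh_word u v x))" for c u v
    by (rule finite_subset[OF _ finite_supp_starh_word]) (auto simp: supp_def)
  ultimately have "lin_ext \<phi> (starh f g) =
      (\<Sum>p\<in>?I. lin_ext \<phi> (\<lambda>x. f (fst p) * g (snd p) * starh_word (fst p) (snd p) x))"
    using assms(1,2) by (simp add: lin_ext_sum)
  also have "\<dots> = (\<Sum>p\<in>?I. of_rat (f (fst p)) * \<phi> (fst p) * (of_rat (g (snd p)) * \<phi> (snd p)))"
    by (simp add: lin_ext_scale of_rat_mult mult_ac flip: mult)
  also have "\<dots> = lin_ext \<phi> f * lin_ext \<phi> g"
    by (simp add: lin_ext_def sum_product sum.cartesian_product split_def)
  finally show ?thesis ..
qed

text \<open>Words are read last letter first, as in shr.\<close>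

primrec nested_sum ::
  "(nat \<Rightarrow> nat \<Rightarrow> 'a::comm_ring_1) \<Rightarrow> (nat \<Rightarrow> nat \<Rightarrow> 'a) \<Rightarrow> nat list \<Rightarrow> nat \<Rightarrow> 'a" where
  "nested_sum a b [] m = 1"
| "nested_sum a b (k # u) m =
     (\<Sum>n = 1..m. a k n * nested_sum a b u n + b k n * nested_sum a b u (n - 1))"

lemma nested_sum_0: "nested_sum a b u 0 = (if u = [] then 1 else 0)"
  by (cases u) simp_all

lemma nested_sum_Suc:
  "nested_sum a b (k # u) (Suc m) =
     nested_sum a b (k # u) m + a k (Suc m) * nested_sum a b u (Suc m) +
     b k (Suc m) * nested_sum a b u m"
  by (simp add: sum.cl_ivl_Suc)

lemma lin_ext_nested_sum_rcons_Suc: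
  "lin_ext (\<lambda>x. nested_sum a b x (Suc m)) (rcons k f) =
     lin_ext (\<lambda>x. nested_sum a b x m) (rcons k f) +
     a k (Suc m) * lin_ext (\<lambda>x. nested_sum a b x (Suc m)) f +
     b k (Suc m) * lin_ext (\<lambda>x. nested_sum a b x m) f"
  by (simp add: lin_ext_rcons nested_sum_Suc lin_ext_add_fun lin_ext_scale_fun)

theorem nested_sum_mult_shr:
  fixes a b :: "nat \<Rightarrow> nat \<Rightarrow> 'a::field_char_0"
  assumes a_add: "\<And>k1 k2 n. a (k1 + k2) n = a k1 n * a k2 n"
    and b_add: "\<And>k1 k2 n. b (k1 + k2) n = - (b k1 n * b k2 n)"
  shows "nested_sum a b u m * nested_sum a b v m = lin_ext (\<lambda>x. nested_sum a b x m) (shr u v)"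
proof (induction m arbitrary: u v)
  case 0
  show ?case
    by (simp add: nested_sum_0 lin_ext_delta_coeff finite_supp_shr shr_Nil
        flip: if_distrib[of "\<lambda>z. z = _"])
next
  case (Suc m)
  define G where "G u m = nested_sum a b u m" for u m
  define L where "L m f = lin_ext (\<lambda>x. G x m) f" for m f
  have L_rcons: "L (Suc m) (rcons k f) =
      L m (rcons k f) + a k (Suc m) * L (Suc m) f + b k (Suc m) * L m f" for k f
    unfolding L_def G_def by (rule lin_ext_nested_sum_rcons_Suc)
  have IH: "G u m * G v m = L m (shr u v)" for u v
    unfolding G_def L_def by (rule Suc.IH)
  show ?case
    unfolding G_def[symmetric] L_def[symmetric]
  proof (induction u v rule: shr.induct)
    \<comment> \<open>a_add and b_add let the letter k1 + k2 of shr account for the products of the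
      two new terms of nested_sum_Suc\<close>
    case (3 k1 u1 k2 u2)
    let ?a1 = "a k1 (Suc m)" and ?a2 = "a k2 (Suc m)"
    let ?b1 = "b k1 (Suc m)" and ?b2 = "b k2 (Suc m)"
    have "L (Suc m) (shr (k1 # u1) (k2 # u2)) =
        L m (shr (k1 # u1) (k2 # u2))
        + ?a1 * L (Suc m) (shr u1 (k2 # u2)) + ?b1 * L m (shr u1 (k2 # u2))
        + ?a2 * L (Suc m) (shr (k1 # u1) u2) + ?b2 * L m (shr (k1 # u1) u2)
        - ?a1 * ?a2 * L (Suc m) (shr u1 u2) + ?b1 * ?b2 * L m (shr u1 u2)"
      unfolding L_def lin_ext_shr_Cons_Cons
      by (simp add: L_rcons[unfolded L_def] a_add b_add algebra_simps)
    also have "\<dots> = G (k1 # u1) m * G (k2 # u2) m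
        + ?a1 * G u1 (Suc m) * G (k2 # u2) (Suc m) + ?b1 * G u1 m * G (k2 # u2) m
        + ?a2 * G (k1 # u1) (Suc m) * G u2 (Suc m) + ?b2 * G (k1 # u1) m * G u2 m
        - ?a1 * ?a2 * G u1 (Suc m) * G u2 (Suc m) + ?b1 * ?b2 * G u1 m * G u2 m"
      by (simp add: IH 3 mult.assoc)
    also have "\<dots> = G (k1 # u1) (Suc m) * G (k2 # u2) (Suc m)"
      by (simp add: G_def nested_sum_Suc algebra_simps)
    finally show ?case ..
  qed (simp_all add: L_def G_def lin_ext_delta)
qed

lemma sum_Pow_insert:
  assumes "finite S" "x \<notin> S"
  shows "(\<Sum>B\<in>Pow (insert x S). g B) = (\<Sum>A\<in>Pow S. g A + g (insert x A))"
proof -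
  have "inj_on (insert x) (Pow S)"
    using assms(2) by (intro inj_onI) (metis PowD insert_ident subsetD)
  moreover have "Pow S \<inter> insert x ` Pow S = {}"
    using assms(2) by blast
  ultimately show ?thesis
    using assms(1) by (simp add: Pow_insert sum.union_disjoint sum.reindex sum.distrib)
qed

lemma length_Sbar: "xs \<in> Sbar r M A \<Longrightarrow> length xs = r"
  by (simp add: Sbar_def)

lemma finite_Sbar: "finite (Sbar r M A)"
proof (rule finite_subset)
  show "Sbar r M A \<subseteq> {xs. set xs \<subseteq> {0..M} \<and> length xs = r}"
    by (auto simp: Sbar_def in_set_conv_nth) (meson diff_le_self le_trans)
qed (rule finite_lists_length_eq, simp)

lemma Sbar_mono:
  assumes "ns \<in> Sbar r M A" "i \<le> j" "j < r"
  shows "ns ! i \<le> ns ! j"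
  using assms(2,3)
proof (induction j)
  case (Suc j)
  have "ns ! j \<le> ns ! Suc j"
    using assms(1) Suc.prems unfolding Sbar_def by (cases "Suc j \<in> A") fastforce+
  with Suc show ?case by (cases "i = Suc j") auto
qed simp

lemma Sbar_Suc_pred: "Sbar r (Suc (M - 1)) A = Sbar r M A"
  by (simp add: Sbar_def)

lemma Sbar_insert_ge: "r \<le> i \<Longrightarrow> Sbar r M (insert i A) = Sbar r M A"
  by (auto simp: Sbar_def)

lemma snoc_in_Sbar:
  assumes "length ns = r"
  shows "ns @ [n] \<in> Sbar (Suc r) M A \<longleftrightarrow>
    1 \<le> n \<and> n < M \<and> ns \<in> Sbar r (if r \<in> A then n else Suc n) A"
proof
  assume snoc: "ns @ [n] \<in> Sbar (Suc r) M A"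
  have nth_snoc: "(ns @ [n]) ! i = (if i < r then ns ! i else n)" if "i \<le> r" for i
    using assms that by (simp add: nth_append)
  have last: "0 < r \<Longrightarrow> ns ! (r - 1) \<le> n \<and> (r \<in> A \<longrightarrow> ns ! (r - 1) < n)"
    using snoc unfolding Sbar_def by (auto simp: nth_snoc dest!: spec[of _ r])
  have le_last: "ns ! i \<le> (if r \<in> A then n else Suc n) - 1" if "i < r" for i
  proof -
    have "ns ! i \<le> ns ! (r - 1)"
      using Sbar_mono[OF snoc, of i "r - 1"] that by (simp add: nth_snoc)
    with last that show ?thesis by auto
  qed
  have n: "1 \<le> n \<and> n \<le> M - 1"
    using snoc unfolding Sbar_def by (auto simp: nth_snoc dest!: spec[of _ r])
  have "ns \<in> Sbar r (if r \<in> A then n else Suc n) A"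
    unfolding Sbar_def
  proof (intro CollectI conjI allI impI)
    fix i assume i: "i < r"
    show "1 \<le> ns ! i" using snoc i unfolding Sbar_def by (auto simp: nth_snoc dest!: spec[of _ i])
    show "ns ! i \<le> (if r \<in> A then n else Suc n) - 1" using le_last[OF i] .
  next
    fix i assume i: "0 < i \<and> i < r"
    then show "i \<notin> A \<Longrightarrow> ns ! (i - 1) \<le> ns ! i" "i \<in> A \<Longrightarrow> ns ! (i - 1) < ns ! i"
      using snoc unfolding Sbar_def by (auto simp: nth_snoc split: if_splits dest!: spec[of _ i])
  qed (use assms in simp)
  with n show "1 \<le> n \<and> n < M \<and> ns \<in> Sbar r (if r \<in> A then n else Suc n) A"
    by auto
next
  assume "1 \<le> n \<and> n < M \<and> ns \<in> Sbar r (if r \<in> A then n else Suc n) A"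
  then show "ns @ [n] \<in> Sbar (Suc r) M A"
    using assms unfolding Sbar_def by (auto simp: nth_append less_Suc_eq split: if_splits)
qed

lemma sum_Sbar_Suc:
  "(\<Sum>xs\<in>Sbar (Suc r) M A. f xs) =
     (\<Sum>n\<in>{1..<M}. \<Sum>ns\<in>Sbar r (if r \<in> A then n else Suc n) A. f (ns @ [n]))"
proof -
  have "Sbar (Suc r) M A =
      (\<lambda>(n, ns). ns @ [n]) ` (SIGMA n:{1..<M}. Sbar r (if r \<in> A then n else Suc n) A)"
  proof (intro set_eqI iffI)
    fix xs assume xs: "xs \<in> Sbar (Suc r) M A"
    then have "length xs = Suc r" by (rule length_Sbar)
    then obtain ns n where "xs = ns @ [n]" "length ns = r"
      by (metis append_butlast_last_id length_butlast diff_Suc_1 list.size(3) nat.distinct(1))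
    with xs show "xs \<in> (\<lambda>(n, ns). ns @ [n]) ` (SIGMA n:{1..<M}. Sbar r (if r \<in> A then n else Suc n) A)"
      by (auto simp: snoc_in_Sbar)
  qed (auto simp: snoc_in_Sbar length_Sbar)
  moreover have "inj_on (\<lambda>(n, ns). ns @ [n]) X" for X :: "(nat \<times> nat list) set"
    by (auto simp: inj_on_def)
  ultimately show ?thesis
    by (simp add: sum.reindex sum.Sigma finite_Sbar split_def)
qed

definition Sbar_weight :: "(nat \<Rightarrow> nat \<Rightarrow> 'a::comm_ring_1) \<Rightarrow> (nat \<Rightarrow> nat \<Rightarrow> 'a) \<Rightarrow>
    nat list \<Rightarrow> nat set \<Rightarrow> nat list \<Rightarrow> 'a"
  where "Sbar_weight a b ks A ns =
    (\<Prod>i<length ks. if i \<in> A then b (ks ! i) (ns ! i) else a (ks ! i) (ns ! i))"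

text \<open>Sbar r (Suc m) A is the summation range with entries in {1..m}.\<close>

definition Sbar_sum ::
  "(nat \<Rightarrow> nat \<Rightarrow> 'a::comm_ring_1) \<Rightarrow> (nat \<Rightarrow> nat \<Rightarrow> 'a) \<Rightarrow> nat list \<Rightarrow> nat \<Rightarrow> 'a"
  where "Sbar_sum a b ks m =
    (\<Sum>A\<in>Pow {0..<length ks}. \<Sum>ns\<in>Sbar (length ks) (Suc m) A. Sbar_weight a b ks A ns)"

lemma Sbar_weight_snoc:
  assumes "length ns = length ks"
  shows "Sbar_weight a b (ks @ [k]) A (ns @ [n]) =
    Sbar_weight a b ks A ns * (if length ks \<in> A then b k n else a k n)"
proof -
  have "(\<Prod>i<length ks. if i \<in> A then b ((ks @ [k]) ! i) ((ns @ [n]) ! i)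
        else a ((ks @ [k]) ! i) ((ns @ [n]) ! i)) =
      Sbar_weight a b ks A ns"
    unfolding Sbar_weight_def by (rule prod.cong) (simp_all add: nth_append assms)
  then show ?thesis
    using assms by (simp add: Sbar_weight_def nth_append)
qed

lemma Sbar_weight_insert_length: "Sbar_weight a b ks (insert (length ks) A) = Sbar_weight a b ks A"
  by (simp add: Sbar_weight_def fun_eq_iff)

lemma Sbar_sum_snoc:
  "Sbar_sum a b (ks @ [k]) m =
     (\<Sum>n = 1..m. a k n * Sbar_sum a b ks n + b k n * Sbar_sum a b ks (n - 1))"
proof -
  let ?r = "length ks"
  let ?w = "Sbar_weight a b ks"
  define T where "T B = (\<Sum>n = 1..m. \<Sum>ns\<in>Sbar ?r (if ?r \<in> B then n else Suc n) B.
      ?w B ns * (if ?r \<in> B then b k n else a k n))" for B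
  have notin: "A \<subseteq> {0..<?r} \<Longrightarrow> ?r \<notin> A" for A by auto
  have "Sbar_sum a b (ks @ [k]) m = (\<Sum>B\<in>Pow (insert ?r {0..<?r}). T B)"
    unfolding Sbar_sum_def T_def
    by (intro sum.cong)
      (auto simp: atLeast0_lessThan_Suc sum_Sbar_Suc atLeastLessThanSuc_atLeastAtMost
        Sbar_weight_snoc length_Sbar)
  also have "\<dots> = (\<Sum>A\<in>Pow {0..<?r}. T A + T (insert ?r A))"
    by (rule sum_Pow_insert) auto
  also have "\<dots> = (\<Sum>A\<in>Pow {0..<?r}.
      (\<Sum>n = 1..m. a k n * (\<Sum>ns\<in>Sbar ?r (Suc n) A. ?w A ns)) +
      (\<Sum>n = 1..m. b k n * (\<Sum>ns\<in>Sbar ?r n A. ?w A ns)))"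
    by (intro sum.cong refl)
      (auto simp: notin T_def Sbar_insert_ge Sbar_weight_insert_length sum_distrib_left mult.commute
        cong: sum.cong)
  also have "\<dots> = (\<Sum>n = 1..m. a k n * Sbar_sum a b ks n + b k n * Sbar_sum a b ks (n - 1))"
    unfolding Sbar_sum_def Sbar_Suc_pred sum.distrib sum_distrib_left
    by (subst (1 2) sum.swap) simp
  finally show ?thesis .
qed

lemma Sbar_sum_eq_nested_sum: "Sbar_sum a b ks m = nested_sum a b (rev ks) m"
proof (induction ks arbitrary: m rule: rev_induct)
  case Nil
  have "Sbar 0 (Suc m) {} = {[]}" by (auto simp: Sbar_def)
  then show ?case by (simp add: Sbar_sum_def Sbar_weight_def)
next
  case (snoc k ks)
  then show ?case by (simp add: Sbar_sum_snoc)
qed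

definition harmonic_term :: "nat \<Rightarrow> nat \<Rightarrow> ratfun" where
  "harmonic_term k n = 1 / of_nat n ^ k"

text \<open>The sign (-1)^#A of F_N is absorbed into dual_term.\<close>

definition dual_term :: "nat \<Rightarrow> nat \<Rightarrow> nat \<Rightarrow> ratfun" where
  "dual_term N k n = - (1 / (of_nat (N - n) + tvar) ^ k)"

lemma harmonic_term_add: "harmonic_term (k1 + k2) n = harmonic_term k1 n * harmonic_term k2 n"
  by (simp add: harmonic_term_def power_add)

lemma dual_term_add: "dual_term N (k1 + k2) n = - (dual_term N k1 n * dual_term N k2 n)"
  by (simp add: dual_term_def power_add)

lemma Sbar_weight_harmonic:
  assumes "A \<subseteq> {0..<length ks}"
  shows "(-1) ^ card A * ((\<Prod>i\<in>A. 1 / (of_nat (N - ns ! i) + tvar) ^ (ks ! i)) *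
      (\<Prod>i\<in>{0..<length ks} - A. 1 / of_nat (ns ! i) ^ (ks ! i))) =
    Sbar_weight harmonic_term (dual_term N) ks A ns"
proof -
  have "{..<length ks} \<inter> {i. i \<in> A} = A" "{..<length ks} \<inter> - {i. i \<in> A} = {0..<length ks} - A"
    using assms by auto
  then show ?thesis
    by (simp add: Sbar_weight_def prod.If_cases dual_term_def harmonic_term_def prod_uminus
        mult.assoc)
qed

lemma F_idx_eq_nested_sum: "F_idx N ks = nested_sum harmonic_term (dual_term N) (rev ks) (N - 1)"
proof -
  have "F_idx N ks = Sbar_sum harmonic_term (dual_term N) ks (N - 1)"
    unfolding F_idx_def Let_def Sbar_sum_def Sbar_Suc_pred
    by (intro sum.cong refl) (simp add: sum_distrib_left Sbar_weight_harmonic)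
  then show ?thesis by (simp add: Sbar_sum_eq_nested_sum)
qed

lemma F_idx_mult: "F_idx N u * F_idx N v = lin_ext (F_idx N) (starh_word u v)"
proof -
  have "F_idx N u * F_idx N v =
      lin_ext (\<lambda>x. nested_sum harmonic_term (dual_term N) x (N - 1)) (shr (rev u) (rev v))"
    unfolding F_idx_eq_nested_sum
    by (rule nested_sum_mult_shr) (rule harmonic_term_add dual_term_add)+
  also have "\<dots> = lin_ext (F_idx N) (starh_word u v)"
    by (simp add: starh_word_def lin_ext_rev F_idx_eq_nested_sum)
  finally show ?thesis .
qed

theorem mainTheorem14:
  fixes N :: nat and w1 w2 :: "nat list \<Rightarrow> rat"
  assumes "0 < N" and "w1 \<in> H1" and "w2 \<in> H1"
  shows "FN N w1 * FN N w2 = FN N (starh w1 w2)"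
proof -
  have FN_eq: "FN N w = lin_ext (F_idx N) w" for w
    by (simp add: FN_def lin_ext_def rf_const_eq_of_rat)
  have "finite (supp w1)" "finite (supp w2)"
    using assms(2,3) by (simp_all add: H1_def)
  then show ?thesis
    unfolding FN_eq by (rule lin_ext_starh[OF _ _ F_idx_mult])
qed

end
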